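(* Let $P^n_\omega$ be a non-trivially weighted edge-weighted path on $n$ vertices whose edge ideal $I(P^n_\omega)$ is integrally closed. Then $P^n_\omega$ has at most two edges with non-trivial weight.
   Context: $\mathbb{K}$ is a field, $S=\mathbb{K}[x_1,\dots,x_n]$. For a simple graph $G$ with weight function $\omega:E(G)\to\mathbb{Z}_{>0}$, $I(G_\omega)=(x_i^{\omega(e)}x_j^{\omega(e)}\mid e=\{x_i,x_j\}\in E(G))$. An edge $e$ has non-trivial weight if $\omega(e)\ge 2$; $G_\omega$ is non-trivially weighted if at least one edge has non-trivial weight. An ideal $I$ is integrally closed if it equals its integral closure $\overline{I}$ (the set of $f\in S$ satisfying an equation $f^k+c_1f^{k-1}+\cdots+c_k=0$ with $c_i\in I^i$). *)

theory Defs
  imports "HOL-Library.Poly_Mapping"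
begin

(* The ring S = K[x_1..x_n] is represented as the
  set of polynomials only involving the variables with index < n.*)

type_synonym 'a mpoly = "(nat \<Rightarrow>\<^sub>0 nat) \<Rightarrow>\<^sub>0 'a"

definition polyS :: "nat \<Rightarrow> 'a::field mpoly set" where
  "polyS n = {p. \<forall>m \<in> Poly_Mapping.keys p. Poly_Mapping.keys m \<subseteq> {..<n}}"

definition var_pow :: "nat \<Rightarrow> nat \<Rightarrow> 'a::field mpoly" where
  "var_pow i a = Poly_Mapping.single (Poly_Mapping.single i a) 1"

definition ideal_span :: "nat \<Rightarrow> 'a::field mpoly set \<Rightarrow> 'a mpoly set" where
  "ideal_span n G = {p. \<exists>F r. finite F \<and> F \<subseteq> G \<and> (\<forall>g\<in>F. r g \<in> polyS n)
                          \<and> p = (\<Sum>g\<in>F. r g * g)}"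

definition ideal_power :: "nat \<Rightarrow> 'a::field mpoly set \<Rightarrow> nat \<Rightarrow> 'a mpoly set" where
  "ideal_power n I k = ideal_span n {prod_list xs | xs. length xs = k \<and> set xs \<subseteq> I}"

definition integral_closure :: "nat \<Rightarrow> 'a::field mpoly set \<Rightarrow> 'a mpoly set" where
  "integral_closure n I = {f \<in> polyS n. \<exists>k\<ge>1. \<exists>c. (\<forall>i\<in>{1..k}. c i \<in> ideal_power n I i)
                            \<and> f ^ k + (\<Sum>i=1..k. c i * f ^ (k - i)) = 0}"

definition integrally_closed :: "nat \<Rightarrow> 'a::field mpoly set \<Rightarrow> bool" where
  "integrally_closed n I \<longleftrightarrow> integral_closure n I = I"

(* Path P^n on vertices x_0,...,x_(n-1) with edges e_i = {x_i, x_{i+1}}, i < n - 1;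
  weight of edge e_i is w i (a positive integer).  Edge ideal of the weighted path.*)
definition weighted_path_edge_ideal :: "nat \<Rightarrow> (nat \<Rightarrow> nat) \<Rightarrow> 'a::field mpoly set" where
  "weighted_path_edge_ideal n w =
     ideal_span n {var_pow i (w i) * var_pow (Suc i) (w i) | i. i < n - 1}"

end

(*
  Let edges e_i and e_k carry weights a, b \<ge> 2 and suppose k \<noteq> i + 2, so that they are not
  the two ends of a path of length three.  The monomial
  f = (x_i x_{i+1})^\<lceil>a/2\<rceil> (x_k x_{k+1})^\<lceil>b/2\<rceil> satisfies f^2 \<in> I^2, hence is integral
  over I, but no generator (x_j x_{j+1})^{w_j} divides it, so f \<notin> I.  Among any three heavy
  edges, the leftmost one and one of the other two are not exactly two apart.
*)

theory Submission
  imports Defs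
begin

lemma polyS_uminus: "p \<in> polyS n \<Longrightarrow> - p \<in> polyS n"
  by (simp add: polyS_def in_keys_iff)

lemma single_in_polyS: "Poly_Mapping.keys m \<subseteq> {..<n} \<Longrightarrow> Poly_Mapping.single m c \<in> polyS n"
  by (simp add: polyS_def)

lemma zero_in_ideal_span: "0 \<in> ideal_span n G"
  unfolding ideal_span_def by (intro CollectI exI[of _ "{}"]) simp

lemma generator_in_ideal_span:
  assumes "g \<in> G"
  shows "g \<in> ideal_span n G"
proof -
  have "(1::'a::field mpoly) \<in> polyS n"
    by (simp add: polyS_def)
  then show ?thesis
    unfolding ideal_span_def using assms
    by (intro CollectI exI[of _ "{g}"] exI[of _ "\<lambda>_. 1"]) simp
qed

lemma uminus_in_ideal_span:
  assumes "p \<in> ideal_span n G"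
  shows "- p \<in> ideal_span n G"
proof -
  obtain F r where F: "finite F" "F \<subseteq> G" and r: "\<forall>g\<in>F. r g \<in> polyS n"
    and p: "p = (\<Sum>g\<in>F. r g * g)"
    using assms unfolding ideal_span_def by blast
  have "\<forall>g\<in>F. - r g \<in> polyS n"
    using r by (simp add: polyS_uminus)
  moreover have "- p = (\<Sum>g\<in>F. - r g * g)"
    by (simp add: p sum_negf)
  ultimately show ?thesis
    unfolding ideal_span_def using F by (intro CollectI exI[of _ F] exI[of _ "\<lambda>g. - r g"]) simp
qed

lemma mult_prod_list_in_ideal_power:
  assumes "r \<in> polyS n" "set xs \<subseteq> I"
  shows "r * prod_list xs \<in> ideal_power n I (length xs)"
  unfolding ideal_power_def ideal_span_def using assms
  by (intro CollectI exI[of _ "{prod_list xs}"] exI[of _ "\<lambda>_. r"]) auto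

lemma keys_ideal_span_monomials:
  assumes "p \<in> ideal_span n ((\<lambda>e. Poly_Mapping.single e 1) ` E)" "m \<in> Poly_Mapping.keys p"
  shows "\<exists>e\<in>E. Poly_Mapping.lookup e \<le> Poly_Mapping.lookup m"
proof -
  obtain F r where F: "F \<subseteq> (\<lambda>e. Poly_Mapping.single e 1) ` E" and p: "p = (\<Sum>g\<in>F. r g * g)"
    using assms(1) unfolding ideal_span_def by blast
  obtain g where "g \<in> F" and m: "m \<in> Poly_Mapping.keys (r g * g)"
    using assms(2) keys_sum[of "\<lambda>g. r g * g" F] unfolding p by blast
  then obtain e where "e \<in> E" and g: "g = Poly_Mapping.single e 1"
    using F by blast
  have "m \<in> {a + b | a b. a \<in> Poly_Mapping.keys (r g) \<and> b \<in> Poly_Mapping.keys g}"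
    using keys_mult m by blast
  then obtain a where "m = a + e"
    unfolding g by auto
  then show ?thesis
    using \<open>e \<in> E\<close> by (intro bexI[of _ e]) (simp_all add: le_fun_def lookup_add)
qed

lemma integral_closureI_power:
  assumes "f \<in> polyS n" "1 \<le> k" "f ^ k \<in> ideal_power n I k"
  shows "f \<in> integral_closure n I"
proof -
  define c where "c i = (if i = k then - (f ^ k) else 0)" for i
  have c: "\<forall>i\<in>{1..k}. c i \<in> ideal_power n I i"
    using assms(3) uminus_in_ideal_span zero_in_ideal_span
    unfolding c_def ideal_power_def by auto
  have "(\<Sum>i=1..k. c i * f ^ (k - i)) = (\<Sum>i=1..k. if i = k then - (f ^ k) else 0)"
    by (rule sum.cong) (simp_all add: c_def)
  then have "(\<Sum>i=1..k. c i * f ^ (k - i)) = - (f ^ k)"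
    using assms(2) by simp
  then show ?thesis
    unfolding integral_closure_def using assms(1,2) c by (intro CollectI conjI exI[of _ k] exI[of _ c]) simp_all
qed

definition edge_exponent :: "nat \<Rightarrow> nat \<Rightarrow> (nat \<Rightarrow>\<^sub>0 nat)" where
  "edge_exponent i a = Poly_Mapping.single i a + Poly_Mapping.single (Suc i) a"

lemma lookup_edge_exponent:
  "Poly_Mapping.lookup (edge_exponent i a) v = (if v = i \<or> v = Suc i then a else 0)"
  by (simp add: edge_exponent_def lookup_add lookup_single when_def)

lemma edge_exponent_add: "edge_exponent i (a + b) = edge_exponent i a + edge_exponent i b"
  by (simp add: edge_exponent_def single_add ac_simps)

lemma keys_edge_exponent: "Poly_Mapping.keys (edge_exponent i a) \<subseteq> {i, Suc i}"
  by (auto simp: in_keys_iff lookup_edge_exponent split: if_splits)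

lemma weighted_path_edge_ideal_monomial:
  "weighted_path_edge_ideal n w =
     ideal_span n ((\<lambda>e. Poly_Mapping.single e 1) ` (\<lambda>i. edge_exponent i (w i)) ` {..<n - 1})"
proof -
  have "var_pow i a * var_pow (Suc i) a = (Poly_Mapping.single (edge_exponent i a) 1 :: 'a::field mpoly)"
    for i a
    by (simp add: var_pow_def mult_single edge_exponent_def)
  then show ?thesis
    unfolding weighted_path_edge_ideal_def by (auto intro!: arg_cong[where f = "ideal_span n"])
qed

text \<open>Two half-weighted edges cover no edge of positive weight other than themselves, unless
  they are the two ends of a path of length three, whose middle edge they may cover.\<close>

lemma edge_exponent_le_two_edges:
  assumes le: "Poly_Mapping.lookup (edge_exponent j c)
      \<le> Poly_Mapping.lookup (edge_exponent i p + edge_exponent k r)"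
    and "1 \<le> c" "i < k" "k \<noteq> i + 2"
  shows "j = i \<and> c \<le> p \<or> j = k \<and> c \<le> r"
proof -
  have "c \<le> Poly_Mapping.lookup (edge_exponent i p + edge_exponent k r) j"
    and "c \<le> Poly_Mapping.lookup (edge_exponent i p + edge_exponent k r) (Suc j)"
    using le_funD[OF le, of j] le_funD[OF le, of "Suc j"] by (simp_all add: lookup_edge_exponent)
  then show ?thesis
    using assms(2-4) by (auto simp: lookup_add lookup_edge_exponent split: if_splits)
qed

lemma half_edges_in_integral_closure:
  assumes "i < n - 1" "k < n - 1" "w i \<le> 2 * p" "w k \<le> 2 * r"
  shows "Poly_Mapping.single (edge_exponent i p + edge_exponent k r) 1
      \<in> integral_closure n (weighted_path_edge_ideal n w :: 'a::field mpoly set)"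
proof -
  define M where "M = edge_exponent i p + edge_exponent k r"
  define D where "D = edge_exponent i (2 * p - w i) + edge_exponent k (2 * r - w k)"
  define f where "f = (Poly_Mapping.single M 1 :: 'a mpoly)"
  define q where "q = (Poly_Mapping.single D 1 :: 'a mpoly)"
  define gi where "gi = (Poly_Mapping.single (edge_exponent i (w i)) 1 :: 'a mpoly)"
  define gk where "gk = (Poly_Mapping.single (edge_exponent k (w k)) 1 :: 'a mpoly)"
  have "Poly_Mapping.keys (edge_exponent i a + edge_exponent k b) \<subseteq> {..<n}" for a b
    using keys_add[of "edge_exponent i a"] keys_edge_exponent[of i a] keys_edge_exponent[of k b]
      assms(1,2) by fastforce
  then have in_polyS: "f \<in> polyS n" "q \<in> polyS n"
    unfolding f_def q_def M_def D_def by (simp_all add: single_in_polyS)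
  have "p + p = (2 * p - w i) + w i" "r + r = (2 * r - w k) + w k"
    using assms(3,4) by simp_all
  then have "M + M = edge_exponent i ((2 * p - w i) + w i) + edge_exponent k ((2 * r - w k) + w k)"
    unfolding M_def by (metis edge_exponent_add add.assoc add.left_commute)
  also have "\<dots> = D + (edge_exponent i (w i) + edge_exponent k (w k))"
    unfolding D_def edge_exponent_add by (simp only: ac_simps)
  finally have "f ^ 2 = q * prod_list [gi, gk]"
    by (simp add: f_def q_def gi_def gk_def power2_eq_square mult_single)
  moreover have "set [gi, gk] \<subseteq> weighted_path_edge_ideal n w"
    unfolding gi_def gk_def weighted_path_edge_ideal_monomial
    using assms(1,2) by (auto intro!: generator_in_ideal_span)
  then have "q * prod_list [gi, gk] \<in> ideal_power n (weighted_path_edge_ideal n w) (length [gi, gk])"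
    by (rule mult_prod_list_in_ideal_power[OF in_polyS(2)])
  ultimately have "f ^ 2 \<in> ideal_power n (weighted_path_edge_ideal n w) 2"
    by (simp add: numeral_2_eq_2)
  then show ?thesis
    using integral_closureI_power[OF in_polyS(1), of 2] unfolding f_def M_def by simp
qed

lemma half_edges_not_in_weighted_path_edge_ideal:
  assumes pos: "\<forall>j < n - 1. w j \<ge> 1"
    and "i < k" "k \<noteq> i + 2" "p < w i" "r < w k"
  shows "Poly_Mapping.single (edge_exponent i p + edge_exponent k r) 1
      \<notin> (weighted_path_edge_ideal n w :: 'a::field mpoly set)"
proof
  assume "Poly_Mapping.single (edge_exponent i p + edge_exponent k r) 1
      \<in> (weighted_path_edge_ideal n w :: 'a mpoly set)"
  then obtain j where "j < n - 1"
    and "Poly_Mapping.lookup (edge_exponent j (w j))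
      \<le> Poly_Mapping.lookup (edge_exponent i p + edge_exponent k r)"
    using keys_ideal_span_monomials unfolding weighted_path_edge_ideal_monomial by fastforce
  then have "j = i \<and> w j \<le> p \<or> j = k \<and> w j \<le> r"
    using edge_exponent_le_two_edges pos assms(2,3) by blast
  then show False
    using assms(4,5) by auto
qed

lemma weighted_path_not_integrally_closed:
  assumes pos: "\<forall>j < n - 1. w j \<ge> 1"
    and "i < k" "k < n - 1" "k \<noteq> i + 2" "2 \<le> w i" "2 \<le> w k"
  shows "\<not> integrally_closed n (weighted_path_edge_ideal n w :: 'a::field mpoly set)"
proof -
  define p where "p = (w i + 1) div 2"
  define r where "r = (w k + 1) div 2"
  have "w i \<le> 2 * p" "w k \<le> 2 * r" "p < w i" "r < w k"
    using assms(5,6) unfolding p_def r_def by auto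
  then show ?thesis
    using half_edges_in_integral_closure[of i n k w p r]
      half_edges_not_in_weighted_path_edge_ideal[OF pos, of i k p r] assms(2-4)
    unfolding integrally_closed_def by force
qed

lemma exists_pair_not_two_apart:
  fixes S :: "nat set"
  assumes "2 < card S"
  shows "\<exists>x\<in>S. \<exists>y\<in>S. x < y \<and> y \<noteq> x + 2"
proof -
  have "finite S" "S \<noteq> {}"
    using assms card.infinite by fastforce+
  define x where "x = Min S"
  have "0 < card (S - {x, x + 2})"
    using diff_card_le_card_Diff[OF finite.insertI[OF finite.insertI[OF finite.emptyI]], of S x "x + 2"]
      card_insert_le[of "{x + 2}" x] assms by auto
  then obtain y where "y \<in> S" "y \<noteq> x" "y \<noteq> x + 2"
    by (auto simp: card_gt_0_iff)
  moreover have "x \<in> S" "x \<le> y"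
    using \<open>finite S\<close> \<open>S \<noteq> {}\<close> \<open>y \<in> S\<close> by (simp_all add: x_def)
  ultimately show ?thesis
    by (metis le_neq_implies_less)
qed

theorem corollary4p5:
  fixes n :: nat and w :: "nat \<Rightarrow> nat"
  assumes pos: "\<forall>i < n - 1. w i \<ge> 1"
    and nontriv: "\<exists>i < n - 1. w i \<ge> 2"
    and closed: "integrally_closed n (weighted_path_edge_ideal n w :: 'a::field mpoly set)"
  shows "card {i. i < n - 1 \<and> w i \<ge> 2} \<le> 2"
proof (rule ccontr)
  assume "\<not> ?thesis"
  then obtain i k where "i < k" "k \<noteq> i + 2" "i < n - 1" "k < n - 1" "w i \<ge> 2" "w k \<ge> 2"
    using exists_pair_not_two_apart[of "{i. i < n - 1 \<and> w i \<ge> 2}"] by auto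
  then show False
    using weighted_path_not_integrally_closed[OF pos] closed by blast
qed

end
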